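(* Let $\mathcal{S}$ be a finite set with $N_{\mathcal{S}} = |\mathcal{S}| \ge 2$ elements, and let $\mathcal{X}$ be an input space with a probability distribution $p$, where every $x \in \mathcal{X}$ has a unique correct output $s_x \in \mathcal{S}$ and $\mathcal{X} = \mathcal{X}^{\text{in}} \cup \mathcal{X}^{\text{out}}$ is a disjoint union. Consider an EnSolver $m$ built from $M$ base models $m_1,\dots,m_M$ with uncertainty threshold $\tau \in (0,1]$ such that $M(1-\tau)$ is a positive integer, satisfying the standing assumptions (independence and (A1)–(A3)) described in the context. Then $$\mathcal{E}(M, N_{\mathcal{S}}, \tau) > p\left( m(x) \notin \{ s_x, s_{\text{skip}} \} \,\middle|\, x \in \mathcal{X}^{\text{out}} \right).$$
   Context: Setting: $\mathcal{S}$ is a finite set of output strings with $N_{\mathcal{S}} = |\mathcal{S}| \ge 2$; inputs $x \in \mathcal{X}$ are drawn from a probability distribution $p$ on $\mathcal{X}$, each $x$ having a single correct output $s_x \in \mathcal{S}$. $\mathcal{X}$ is the disjoint union of the in-distribution set $\mathcal{X}^{\text{in}}$ and the out-of-distribution set $\mathcal{X}^{\text{out}}$, and $\alpha = p(x \in \mathcal{X}^{\text{in}})$. An ensemble consists of $M$ base models $m_1, \dots, m_M$, each of which produces a (random) prediction $m_i(x) \in \mathcal{S}$ on input $x$; probabilities are taken jointly over $x \sim p$ and the predictions, and the base models make their predictions independently of each other given the input (in particular conditionally on $x \in \mathcal{X}^{\text{in}}$ and conditionally on $x \in \mathcal{X}^{\text{out}}$). Let $\beta_i = p(m_i(x) =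 s_x \mid x \in \mathcal{X}^{\text{in}})$, $\beta_{\text{min}} = \min_i \beta_i$, $\beta_{\text{max}} = \max_i \beta_i$. Assumptions: (A1) $\beta_{\text{min}} > 1/N_{\mathcal{S}}$; (A2) for each $i$, conditionally on $x \in \mathcal{X}^{\text{in}}$, $m_i(x)$ equals each incorrect string $s \neq s_x$ with probability $(1-\beta_i)/(N_{\mathcal{S}}-1)$; (A3) for each $i$, conditionally on $x \in \mathcal{X}^{\text{out}}$, $m_i(x)$ equals each $s \in \mathcal{S}$ with probability $1/N_{\mathcal{S}}$. For $x$ and $s \in \mathcal{S}$, $n(x,s)$ is the number of base models with $m_i(x) = s$. The threshold $\tau \in (0,1]$ is such that $M(1-\tau)$ is a positive integer. The EnSolver $m$ acts as follows on input $x$: let $p_{\max} = \max_{s} n(x,s)/M$ and uncertainty $u = 1 - p_{\max}$; if $u < \tau$ it outputs a string $y$ maximizing $n(x,\cdot)$, otherwise it outputs a special skip symbol $s_{\text{skip}}$. The out-of-distribution error bound is $\mathcal{E}(M, N_{\mathcal{S}}, \tau) = \binom{M}{\lfloor M/2 \rfloor} (N_{\mathcal{S}})^{-M(1-\tau)}$. *)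

theory Defs
  imports "HOL-Probability.Probability"
begin

text \<open>Conditional probability P(A | B) = P(A \<inter> B) / P(B) (0 when P(B) = 0).\<close>
definition cprob :: "'w measure \<Rightarrow> 'w set \<Rightarrow> 'w set \<Rightarrow> real" where
  "cprob M A B = measure M (A \<inter> B) / measure M B"

text \<open>Base models are indexed 0..<M; pred i w is the prediction of model i in outcome w.
  n(x,s) = number of base models predicting s.\<close>
definition vote_count :: "nat \<Rightarrow> (nat \<Rightarrow> 'w \<Rightarrow> 's) \<Rightarrow> 'w \<Rightarrow> 's \<Rightarrow> nat" where
  "vote_count M pred w s = card {i \<in> {0..<M}. pred i w = s}"

definition p_max :: "'s set \<Rightarrow> nat \<Rightarrow> (nat \<Rightarrow> 'w \<Rightarrow> 's) \<Rightarrow> 'w \<Rightarrow> real" where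
  "p_max S M pred w = Max ((\<lambda>s. real (vote_count M pred w s) / real M) ` S)"

definition uncertainty :: "'s set \<Rightarrow> nat \<Rightarrow> (nat \<Rightarrow> 'w \<Rightarrow> 's) \<Rightarrow> 'w \<Rightarrow> real" where
  "uncertainty S M pred w = 1 - p_max S M pred w"

text \<open>The EnSolver output (None = skip symbol): if u < tau it outputs some string
  maximizing n(x, .) (any tie-breaking), otherwise it skips.\<close>
definition is_ensolver_output ::
  "'s set \<Rightarrow> nat \<Rightarrow> real \<Rightarrow> (nat \<Rightarrow> 'w \<Rightarrow> 's) \<Rightarrow> 'w \<Rightarrow> 's option \<Rightarrow> bool" where
  "is_ensolver_output S M \<tau> pred w out \<longleftrightarrow>
     (uncertainty S M pred w < \<tau> \<longrightarrow>
        (\<exists>y\<in>S. out = Some y \<and> (\<forall>s\<in>S. vote_count M pred w s \<le> vote_count M pred w y))) \<and>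
     (\<not> uncertainty S M pred w < \<tau> \<longrightarrow> out = None)"

definition err_bound :: "nat \<Rightarrow> nat \<Rightarrow> real \<Rightarrow> real" where
  "err_bound M N \<tau> = real (M choose (M div 2)) * real N powr (- (real M * (1 - \<tau>)))"

end

theory Submission
  imports Defs
begin

text \<open>Write \<open>N = card S\<close> and \<open>K = M(1 - \<tau>)\<close>. On out-of-distribution inputs the EnSolver
  commits to an answer only if some string receives more than \<open>K\<close> of the \<open>M\<close> votes, and by
  independence and uniformity every vote vector \<open>{0..<M} \<rightarrow> S\<close> has conditional probability
  \<open>N\<^sup>-\<^sup>M\<close>. A union bound over the string and a \<open>(K+1)\<close>-set of agreeing models shows that
  fewer than \<open>(M choose (M div 2)) N\<^sup>M\<^sup>-\<^sup>K\<close> vote vectors are of this kind, which gives the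
  bound \<open>(M choose (M div 2)) N\<^sup>-\<^sup>K\<close>.\<close>

lemma card_UN_less_sum:
  assumes "finite I" and "\<And>i. i \<in> I \<Longrightarrow> finite (E i)"
    and "a \<in> I" and "b \<in> I" and "a \<noteq> b" and "x \<in> E a" and "x \<in> E b"
  shows "card (\<Union>i\<in>I. E i) < (\<Sum>i\<in>I. card (E i))"
proof -
  let ?R = "\<Union>i\<in>I - {a}. E i"
  have fin_a: "finite (E a)" and fin_R: "finite ?R"
    using assms(1-3) by auto
  have union: "(\<Union>i\<in>I. E i) = E a \<union> ?R"
    using assms(3) by blast
  have "x \<in> E a \<inter> ?R"
    using assms(4-7) by blast
  then have "card (E a \<inter> ?R) > 0"
    using fin_a by (auto simp: card_gt_0_iff)
  moreover have "card (E a \<union> ?R) + card (E a \<inter> ?R) = card (E a) + card ?R"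
    using card_Un_Int[OF fin_a fin_R] by simp
  moreover have "card ?R \<le> (\<Sum>i\<in>I - {a}. card (E i))"
    by (rule card_UN_le) (use assms(1) in auto)
  moreover have "(\<Sum>i\<in>I. card (E i)) = card (E a) + (\<Sum>i\<in>I - {a}. card (E i))"
    using sum.remove[OF assms(1,3)] by simp
  ultimately show ?thesis
    unfolding union by linarith
qed

lemma card_PiE_constant_on:
  assumes "finite I" and "T \<subseteq> I" and "s \<in> S"
  shows "card {f \<in> I \<rightarrow>\<^sub>E S. \<forall>i\<in>T. f i = s} = card S ^ card (I - T)"
proof -
  have "{f \<in> I \<rightarrow>\<^sub>E S. \<forall>i\<in>T. f i = s} = PiE I (\<lambda>i. if i \<in> T then {s} else S)"
    using assms(2,3) by (auto simp: PiE_iff extensional_def split: if_splits)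
  then have "card {f \<in> I \<rightarrow>\<^sub>E S. \<forall>i\<in>T. f i = s} = (\<Prod>i\<in>I. card (if i \<in> T then {s} else S))"
    by (simp only: card_PiE[OF assms(1)])
  also have "\<dots> = (\<Prod>i\<in>I. if i \<in> T then 1 else card S)"
    by (intro prod.cong) auto
  also have "\<dots> = card S ^ card (I - T)"
    using assms(1,2) by (simp add: prod.If_cases Diff_eq Int_absorb2)
  finally show ?thesis .
qed

definition heavy_vote_vectors :: "'s set \<Rightarrow> nat \<Rightarrow> nat \<Rightarrow> (nat \<Rightarrow> 's) set" where
  "heavy_vote_vectors S M K = {f \<in> {0..<M} \<rightarrow>\<^sub>E S. \<exists>s\<in>S. K < card {i \<in> {0..<M}. f i = s}}"

lemma finite_heavy_vote_vectors:
  "finite S \<Longrightarrow> finite (heavy_vote_vectors S M K)"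
  unfolding heavy_vote_vectors_def
  by (rule finite_subset[of _ "{0..<M} \<rightarrow>\<^sub>E S"]) (auto simp: finite_PiE)

lemma card_heavy_vote_vectors_less:
  assumes "finite S" and "S \<noteq> {}" and "0 < K" and "K < M"
  shows "card (heavy_vote_vectors S M K) < (M choose (M div 2)) * card S ^ (M - K)"
proof -
  define N where "N = card S"
  define Ts where "Ts = {T. T \<subseteq> {0..<M} \<and> card T = K + 1}"
  define E where "E = (\<lambda>(s, T). {f \<in> {0..<M} \<rightarrow>\<^sub>E S. \<forall>i\<in>T. f i = s})"
  have fin_Ts: "finite Ts"
    unfolding Ts_def by (rule finite_subset[of _ "Pow {0..<M}"]) auto
  have card_Ts: "card Ts = M choose (K + 1)"
    unfolding Ts_def using n_subsets[of "{0..<M}" "K + 1"] by simp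
  have fin_E: "finite (E p)" for p
    unfolding E_def using assms(1)
    by (cases p) (auto intro: finite_subset[of _ "{0..<M} \<rightarrow>\<^sub>E S"] simp: finite_PiE)
  have card_E: "card (E p) = N ^ (M - (K + 1))" if "p \<in> S \<times> Ts" for p
    using that card_PiE_constant_on[of "{0..<M}" _ _ S]
    by (auto simp: E_def Ts_def N_def card_Diff_subset finite_subset)
  have heavy_sub: "heavy_vote_vectors S M K \<subseteq> (\<Union>p\<in>S \<times> Ts. E p)"
  proof
    fix f assume "f \<in> heavy_vote_vectors S M K"
    then obtain s where f: "f \<in> {0..<M} \<rightarrow>\<^sub>E S" and "s \<in> S"
      and "K + 1 \<le> card {i \<in> {0..<M}. f i = s}"
      unfolding heavy_vote_vectors_def by auto
    moreover from this obtain T where "T \<subseteq> {i \<in> {0..<M}. f i = s}" and "card T = K + 1"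
      by (meson obtain_subset_with_card_n)
    ultimately show "f \<in> (\<Union>p\<in>S \<times> Ts. E p)"
      unfolding Ts_def E_def by blast
  qed
  have sum_E: "(\<Sum>p\<in>S \<times> Ts. card (E p)) = (M choose (K + 1)) * N ^ (M - K)"
  proof -
    have "(\<Sum>p\<in>S \<times> Ts. card (E p)) = N * (M choose (K + 1)) * N ^ (M - (K + 1))"
      using card_E card_Ts by (simp add: card_cartesian_product N_def)
    also have "\<dots> = (M choose (K + 1)) * N ^ (M - K)"
      using assms(4) by (simp add: Suc_diff_Suc flip: power_Suc)
    finally show ?thesis .
  qed
  have "card (\<Union>p\<in>S \<times> Ts. E p) < (M choose (M div 2)) * N ^ (M - K)"
  proof (cases "2 \<le> M choose (K + 1)")
    case True
    \<comment> \<open>a constant vector is counted once for every \<open>(K+1)\<close>-set\<close>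
    then obtain T1 T2 where "T1 \<in> Ts" "T2 \<in> Ts" "T1 \<noteq> T2"
      using card_Ts by (metis card_le_Suc_iff numeral_2_eq_2 insert_iff)
    moreover obtain s where "s \<in> S"
      using assms(2) by blast
    moreover have "(\<lambda>i\<in>{0..<M}. s) \<in> E (s, T)" if "T \<in> Ts" for T
      using that \<open>s \<in> S\<close> by (auto simp: E_def Ts_def)
    ultimately have "card (\<Union>p\<in>S \<times> Ts. E p) < (\<Sum>p\<in>S \<times> Ts. card (E p))"
      using assms(1) fin_Ts fin_E
      by (intro card_UN_less_sum[where a = "(s, T1)" and b = "(s, T2)"]) auto
    moreover have "M choose (K + 1) \<le> M choose (M div 2)"
      by (rule binomial_maximum)
    ultimately show ?thesis
      using sum_E by (metis mult_le_mono1 order_less_le_trans)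
  next
    case False
    have "M choose 1 \<le> M choose (M div 2)"
      by (rule binomial_maximum)
    then have "M choose (K + 1) < M choose (M div 2)"
      using False assms(3,4) by simp
    moreover have "card (\<Union>p\<in>S \<times> Ts. E p) \<le> (\<Sum>p\<in>S \<times> Ts. card (E p))"
      by (rule card_UN_le) (use assms(1) fin_Ts in auto)
    ultimately show ?thesis
      using sum_E assms(1,2) by (simp add: N_def card_gt_0_iff order_le_less_trans)
  qed
  moreover have "card (heavy_vote_vectors S M K) \<le> card (\<Union>p\<in>S \<times> Ts. E p)"
    using heavy_sub assms(1) fin_Ts fin_E by (intro card_mono) auto
  ultimately show ?thesis
    unfolding N_def by linarith
qed

lemma uncertainty_less_imp_vote_count_greater:
  assumes "finite S" and "S \<noteq> {}" and "0 < M" and "uncertainty S M pred w < \<tau>"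
  shows "\<exists>s\<in>S. real M * (1 - \<tau>) < real (vote_count M pred w s)"
proof -
  let ?g = "\<lambda>s. real (vote_count M pred w s) / real M"
  have "p_max S M pred w \<in> ?g ` S"
    unfolding p_max_def using assms(1,2) by (intro Max_in) auto
  then obtain s where "s \<in> S" and "real (vote_count M pred w s) = real M * p_max S M pred w"
    using assms(3) by (auto simp: field_simps)
  moreover have "1 - \<tau> < p_max S M pred w"
    using assms(4) unfolding uncertainty_def by simp
  ultimately show ?thesis
    using assms(3) by (metis mult_strict_left_mono of_nat_0_less_iff)
qed

lemma ensolver_answers_within_heavy_votes:
  assumes "\<And>w. w \<in> W \<Longrightarrow> is_ensolver_output S M \<tau> pred w (ens w)"
    and "\<And>i w. i < M \<Longrightarrow> w \<in> W \<Longrightarrow> pred i w \<in> S"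
    and "finite S" and "S \<noteq> {}" and "0 < M" and "real M * (1 - \<tau>) = real K"
  shows "{w \<in> W. ens w \<noteq> None} \<subseteq> (\<Union>f\<in>heavy_vote_vectors S M K. {w \<in> W. \<forall>i<M. pred i w = f i})"
proof
  fix w assume "w \<in> {w \<in> W. ens w \<noteq> None}"
  then have "w \<in> W" and "ens w \<noteq> None"
    by auto
  then have "uncertainty S M pred w < \<tau>"
    using assms(1)[of w] unfolding is_ensolver_output_def by auto
  then obtain s where "s \<in> S" and "real K < real (vote_count M pred w s)"
    using uncertainty_less_imp_vote_count_greater[OF assms(3-5)] assms(6) by metis
  moreover have "card {i \<in> {0..<M}. (\<lambda>i\<in>{0..<M}. pred i w) i = s} = vote_count M pred w s"
    unfolding vote_count_def by (rule arg_cong[where f = card]) auto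
  moreover have "(\<lambda>i\<in>{0..<M}. pred i w) \<in> {0..<M} \<rightarrow>\<^sub>E S"
    using assms(2) \<open>w \<in> W\<close> by auto
  ultimately have "(\<lambda>i\<in>{0..<M}. pred i w) \<in> heavy_vote_vectors S M K"
    unfolding heavy_vote_vectors_def by (intro CollectI conjI bexI[of _ s]) simp_all
  then show "w \<in> (\<Union>f\<in>heavy_vote_vectors S M K. {w \<in> W. \<forall>i<M. pred i w = f i})"
    by (rule UN_I) (use \<open>w \<in> W\<close> in auto)
qed

lemma cprob_vote_vector_uniform:
  assumes "f \<in> {0..<M} \<rightarrow> S"
    and "cprob P {w \<in> space P. \<forall>i<M. pred i w = f i} B
      = (\<Prod>i<M. cprob P {w \<in> space P. pred i w = f i} B)"
    and "\<And>i s. i < M \<Longrightarrow> s \<in> S \<Longrightarrow> cprob P {w \<in> space P. pred i w = s} B = 1 / real (card S)"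
  shows "cprob P {w \<in> space P. \<forall>i<M. pred i w = f i} B = (1 / real (card S)) ^ M"
proof -
  have "(\<Prod>i<M. cprob P {w \<in> space P. pred i w = f i} B) = (\<Prod>i<M. 1 / real (card S))"
    using assms(1,3) by (intro prod.cong) (auto simp: Pi_iff)
  then show ?thesis
    using assms(2) by simp
qed

lemma (in finite_measure) cprob_union_bound:
  assumes "finite F" and "\<And>f. f \<in> F \<Longrightarrow> A f \<in> sets M" and "B \<in> sets M"
    and "E \<inter> B \<subseteq> (\<Union>f\<in>F. A f)"
  shows "cprob M E B \<le> (\<Sum>f\<in>F. cprob M (A f) B)"
proof -
  have "(\<Union>f\<in>F. A f \<inter> B) \<in> sets M"
    using assms(1-3) by (intro sets.finite_UN) auto
  then have "measure M (E \<inter> B) \<le> measure M (\<Union>f\<in>F. A f \<inter> B)"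
    using assms(4) by (intro finite_measure_mono) auto
  also have "\<dots> \<le> (\<Sum>f\<in>F. measure M (A f \<inter> B))"
    using assms by (intro finite_measure_subadditive_finite) auto
  finally show ?thesis
    unfolding cprob_def sum_divide_distrib[symmetric] by (simp add: divide_right_mono)
qed

lemma err_bound_nat_exponent:
  assumes "real M * (1 - \<tau>) = real K" and "0 < N"
  shows "err_bound M N \<tau> = real (M choose (M div 2)) / real N ^ K"
  using assms unfolding err_bound_def
  by (simp add: powr_minus powr_realpow divide_inverse)

lemma fraction_less_err_bound:
  assumes "real M * (1 - \<tau>) = real K" and "K \<le> M" and "0 < N"
    and "c < (M choose (M div 2)) * N ^ (M - K)"
  shows "real c / real N ^ M < err_bound M N \<tau>"
proof -
  have "real c < real (M choose (M div 2)) * real N ^ (M - K)"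
    using assms(4) by (metis of_nat_less_iff of_nat_mult of_nat_power)
  then have "real c / real N ^ M < real (M choose (M div 2)) * real N ^ (M - K) / real N ^ M"
    using assms(3) by (simp add: divide_strict_right_mono)
  also have "\<dots> = err_bound M N \<tau>"
    using assms(1-3) by (simp add: err_bound_nat_exponent power_diff)
  finally show ?thesis .
qed

theorem lemma1:
  fixes P :: "'w measure" and MX :: "'x measure"
    and X :: "'w \<Rightarrow> 'x" and S :: "'s set" and sx :: "'x \<Rightarrow> 's"
    and Xin Xout :: "'x set" and M :: nat and \<tau> :: real
    and pred :: "nat \<Rightarrow> 'w \<Rightarrow> 's" and ens :: "'w \<Rightarrow> 's option"
  assumes prob: "prob_space P"
    and finS: "finite S" and cardS: "card S \<ge> 2"
    and X_meas: "X \<in> measurable P MX"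
    and Xin_sets: "Xin \<in> sets MX" and Xout_sets: "Xout \<in> sets MX"
    and disj: "Xin \<inter> Xout = {}" and cover: "Xin \<union> Xout = space MX"
    and sx_S: "\<And>x. sx x \<in> S"
    and sx_meas: "sx \<in> measurable MX (count_space UNIV)"
    and pred_meas: "\<And>i. i < M \<Longrightarrow> pred i \<in> measurable P (count_space UNIV)"
    and pred_S: "\<And>i w. i < M \<Longrightarrow> w \<in> space P \<Longrightarrow> pred i w \<in> S"
    and indep_in: "\<And>f. f \<in> {0..<M} \<rightarrow> S \<Longrightarrow>
        cprob P {w \<in> space P. \<forall>i<M. pred i w = f i} {w \<in> space P. X w \<in> Xin}
        = (\<Prod>i<M. cprob P {w \<in> space P. pred i w = f i} {w \<in> space P. X w \<in> Xin})"
    and indep_out: "\<And>f. f \<in> {0..<M} \<rightarrow> S \<Longrightarrow>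
        cprob P {w \<in> space P. \<forall>i<M. pred i w = f i} {w \<in> space P. X w \<in> Xout}
        = (\<Prod>i<M. cprob P {w \<in> space P. pred i w = f i} {w \<in> space P. X w \<in> Xout})"
    and A1: "\<And>i. i < M \<Longrightarrow>
        cprob P {w \<in> space P. pred i w = sx (X w)} {w \<in> space P. X w \<in> Xin} > 1 / real (card S)"
    and A2: "\<And>i s. i < M \<Longrightarrow> s \<in> S \<Longrightarrow>
        measure P {w \<in> space P. X w \<in> Xin \<and> sx (X w) \<noteq> s} > 0 \<Longrightarrow>
        cprob P {w \<in> space P. pred i w = s} {w \<in> space P. X w \<in> Xin \<and> sx (X w) \<noteq> s}
        = (1 - cprob P {w \<in> space P. pred i w = sx (X w)} {w \<in> space P. X w \<in> Xin})
          / (real (card S) - 1)"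
    and A3: "\<And>i s. i < M \<Longrightarrow> s \<in> S \<Longrightarrow>
        cprob P {w \<in> space P. pred i w = s} {w \<in> space P. X w \<in> Xout} = 1 / real (card S)"
    and tau_pos: "0 < \<tau>" and tau_le: "\<tau> \<le> 1"
    and K_int: "\<exists>k::nat. k > 0 \<and> real M * (1 - \<tau>) = real k"
    and ens_def: "\<And>w. w \<in> space P \<Longrightarrow> is_ensolver_output S M \<tau> pred w (ens w)"
  shows "err_bound M (card S) \<tau>
         > cprob P {w \<in> space P. ens w \<notin> {Some (sx (X w)), None}} {w \<in> space P. X w \<in> Xout}"
proof -
  interpret prob_space P by (rule prob)
  obtain K :: nat where "0 < K" and K: "real M * (1 - \<tau>) = real K"
    using K_int by blast
  have "K < M"
    using K \<open>0 < K\<close> mult_pos_pos[OF tau_pos, of "real M"] by (cases "M = 0") (auto simp: algebra_simps)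
  define N where "N = card S"
  have "S \<noteq> {}" and "0 < N"
    using cardS by (auto simp: N_def)
  define B where "B = {w \<in> space P. X w \<in> Xout}"
  have "B \<in> sets P"
    unfolding B_def using X_meas Xout_sets by measurable
  have vote_vector_event: "{w \<in> space P. \<forall>i<M. pred i w = f i} \<in> sets P" for f
    using pred_meas by measurable
  have heavy_cover: "{w \<in> space P. ens w \<notin> {Some (sx (X w)), None}} \<inter> B
      \<subseteq> (\<Union>f\<in>heavy_vote_vectors S M K. {w \<in> space P. \<forall>i<M. pred i w = f i})"
    using ensolver_answers_within_heavy_votes[OF ens_def pred_S finS \<open>S \<noteq> {}\<close> _ K] \<open>0 < K\<close> \<open>K < M\<close>
    by blast
  have vote_vector_prob: "cprob P {w \<in> space P. \<forall>i<M. pred i w = f i} B = (1 / real N) ^ M"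
    if "f \<in> heavy_vote_vectors S M K" for f
    using that indep_out A3 unfolding B_def N_def
    by (intro cprob_vote_vector_uniform) (auto simp: heavy_vote_vectors_def)
  have "cprob P {w \<in> space P. ens w \<notin> {Some (sx (X w)), None}} B
      \<le> real (card (heavy_vote_vectors S M K)) * (1 / real N) ^ M"
    using cprob_union_bound[OF finite_heavy_vote_vectors[OF finS] vote_vector_event \<open>B \<in> sets P\<close> heavy_cover]
      vote_vector_prob by simp
  also have "\<dots> < err_bound M N \<tau>"
    using fraction_less_err_bound[OF K less_imp_le[OF \<open>K < M\<close>] \<open>0 < N\<close>
        card_heavy_vote_vectors_less[OF finS \<open>S \<noteq> {}\<close> \<open>0 < K\<close> \<open>K < M\<close>, folded N_def]]
    by (simp add: power_one_over)
  finally show ?thesis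
    unfolding B_def N_def .
qed

end
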